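(* Let $G$ be an extraspecial $2$-group. (i) Two elements $g,h\in G$ are automorphic (i.e. $\varphi(g)=h$ for some $\varphi\in\mathrm{Aut}(G)$) if and only if $g$ and $h$ have the same order and ($g\in Z(G)\iff h\in Z(G)$). (ii) The number of orbits of the natural action of $\mathrm{Aut}(G)$ on $G$ is $3$ if $G$ is isomorphic to the quaternion group $Q_2$ of order $8$, and $4$ otherwise.
   Context: A special $p$-group is a finite $p$-group whose center, derived subgroup and Frattini subgroup coincide and are elementary abelian; it is extraspecial if $|Z(G)|=p$. *)

theory Defs
  imports "HOL-Algebra.Algebra"
begin

definition grp_center :: "('a, 'b) monoid_scheme \<Rightarrow> 'a set" where
  "grp_center G = {z \<in> carrier G. \<forall>g \<in> carrier G. z \<otimes>\<^bsub>G\<^esub> g = g \<otimes>\<^bsub>G\<^esub> z}"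

text \<open>Maximal subgroups and the Frattini subgroup (intersection of all maximal
  subgroups; equal to the whole group if there are none).\<close>
definition maximal_subgroup :: "'a set \<Rightarrow> ('a, 'b) monoid_scheme \<Rightarrow> bool" where
  "maximal_subgroup H G \<longleftrightarrow> subgroup H G \<and> H \<noteq> carrier G \<and>
     (\<forall>K. subgroup K G \<and> H \<subseteq> K \<longrightarrow> K = H \<or> K = carrier G)"

definition frattini :: "('a, 'b) monoid_scheme \<Rightarrow> 'a set" where
  "frattini G = carrier G \<inter> \<Inter> {H. maximal_subgroup H G}"

definition p_group :: "('a, 'b) monoid_scheme \<Rightarrow> nat \<Rightarrow> bool" where
  "p_group G p \<longleftrightarrow> group G \<and> Factorial_Ring.prime p \<and> finite (carrier G) \<and> (\<exists>n. order G = p ^ n)"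

definition elementary_abelian_subgroup :: "'a set \<Rightarrow> ('a, 'b) monoid_scheme \<Rightarrow> nat \<Rightarrow> bool" where
  "elementary_abelian_subgroup H G p \<longleftrightarrow> subgroup H G \<and>
     (\<forall>x \<in> H. \<forall>y \<in> H. x \<otimes>\<^bsub>G\<^esub> y = y \<otimes>\<^bsub>G\<^esub> x) \<and>
     (\<forall>x \<in> H. x [^]\<^bsub>G\<^esub> p = \<one>\<^bsub>G\<^esub>)"

definition special_p_group :: "('a, 'b) monoid_scheme \<Rightarrow> nat \<Rightarrow> bool" where
  "special_p_group G p \<longleftrightarrow> p_group G p \<and>
     grp_center G = derived G (carrier G) \<and> derived G (carrier G) = frattini G \<and>
     elementary_abelian_subgroup (grp_center G) G p"

definition extraspecial_p_group :: "('a, 'b) monoid_scheme \<Rightarrow> nat \<Rightarrow> bool" where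
  "extraspecial_p_group G p \<longleftrightarrow> special_p_group G p \<and> card (grp_center G) = p"

definition automorphic :: "('a, 'b) monoid_scheme \<Rightarrow> 'a \<Rightarrow> 'a \<Rightarrow> bool" where
  "automorphic G g h \<longleftrightarrow> (\<exists>\<phi> \<in> iso G G. \<phi> g = h)"

definition aut_orbits :: "('a, 'b) monoid_scheme \<Rightarrow> 'a set set" where
  "aut_orbits G = (\<lambda>g. {\<phi> g | \<phi>. \<phi> \<in> iso G G}) ` carrier G"

text \<open>The quaternion group Q_8 = {+-1, +-i, +-j, +-k}: an element is a pair
  (sign, unit), where sign True means negative.\<close>
datatype qunit = Q1 | QI | QJ | QK

fun qunit_mult :: "qunit \<Rightarrow> qunit \<Rightarrow> bool \<times> qunit" where
  "qunit_mult Q1 u = (False, u)"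
| "qunit_mult u Q1 = (False, u)"
| "qunit_mult QI QI = (True, Q1)"
| "qunit_mult QJ QJ = (True, Q1)"
| "qunit_mult QK QK = (True, Q1)"
| "qunit_mult QI QJ = (False, QK)"
| "qunit_mult QJ QI = (True, QK)"
| "qunit_mult QJ QK = (False, QI)"
| "qunit_mult QK QJ = (True, QI)"
| "qunit_mult QK QI = (False, QJ)"
| "qunit_mult QI QK = (True, QJ)"

definition quaternion_mult :: "bool \<times> qunit \<Rightarrow> bool \<times> qunit \<Rightarrow> bool \<times> qunit" where
  "quaternion_mult x y = (fst x \<noteq> (fst y \<noteq> fst (qunit_mult (snd x) (snd y))), snd (qunit_mult (snd x) (snd y)))"

definition quaternion_group :: "(bool \<times> qunit) monoid" where
  "quaternion_group = \<lparr> carrier = UNIV, monoid.mult = quaternion_mult, one = (False, Q1) \<rparr>"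

end

theory Submission
  imports Defs
begin

(*
  In an extraspecial 2-group G with centre {1, z} all commutators and squares are central, so
  y x = x y z^b(x,y) for a biadditive form b with values in Z/2.
  Automorphisms preserve orders and the centre.  Conversely, a map x \<mapsto> x c(x) whose factor
  c(x) is a word in z and a pair u, v, with exponents depending on x only through b(x,u) and
  b(x,v), is an automorphism as soon as c is a crossed homomorphism; for suitable u, v such a
  map sends any noncentral element to any other noncentral element of the same order.  So the
  orbits are {1}, {z}, the noncentral elements of order 4 (there are some, since a group of
  exponent 2 is abelian) and the noncentral involutions.  There are no noncentral involutions
  exactly when G is Q_8: then two noncommuting elements i, j generate G, because a noncentral y
  commuting with both would make y i a noncentral involution.
*)

lemma card_image_fibers: "card ((\<lambda>a. {b \<in> A. f b = f a}) ` A) = card (f ` A)"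
proof -
  have "(\<lambda>a. {b \<in> A. f b = f a}) ` A = (\<lambda>v. {b \<in> A. f b = v}) ` f ` A"
    by (simp add: image_image)
  moreover have "inj_on (\<lambda>v. {b \<in> A. f b = v}) (f ` A)"
    by (rule inj_onI) blast
  ultimately show ?thesis
    by (simp add: card_image)
qed

lemma iso_center_iff:
  assumes G: "monoid G" and \<phi>: "\<phi> \<in> iso G H" and x: "x \<in> carrier G"
  shows "\<phi> x \<in> grp_center H \<longleftrightarrow> x \<in> grp_center G"
proof -
  have hom: "\<phi> \<in> hom G H" and inj: "inj_on \<phi> (carrier G)" and surj: "\<phi> ` carrier G = carrier H"
    using \<phi> by (auto simp: iso_iff)
  have "\<phi> x \<otimes>\<^bsub>H\<^esub> \<phi> y = \<phi> y \<otimes>\<^bsub>H\<^esub> \<phi> x \<longleftrightarrow> x \<otimes>\<^bsub>G\<^esub> y = y \<otimes>\<^bsub>G\<^esub> x"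
    if y: "y \<in> carrier G" for y
  proof -
    have "\<phi> x \<otimes>\<^bsub>H\<^esub> \<phi> y = \<phi> (x \<otimes>\<^bsub>G\<^esub> y)" "\<phi> y \<otimes>\<^bsub>H\<^esub> \<phi> x = \<phi> (y \<otimes>\<^bsub>G\<^esub> x)"
      using hom x y by (simp_all add: hom_mult)
    moreover have "x \<otimes>\<^bsub>G\<^esub> y \<in> carrier G" "y \<otimes>\<^bsub>G\<^esub> x \<in> carrier G"
      using G x y by (simp_all add: monoid.m_closed)
    ultimately show ?thesis
      using inj by (simp add: inj_on_eq_iff)
  qed
  moreover have "(\<forall>g\<in>carrier H. \<phi> x \<otimes>\<^bsub>H\<^esub> g = g \<otimes>\<^bsub>H\<^esub> \<phi> x) \<longleftrightarrow>
      (\<forall>y\<in>carrier G. \<phi> x \<otimes>\<^bsub>H\<^esub> \<phi> y = \<phi> y \<otimes>\<^bsub>H\<^esub> \<phi> x)"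
    by (simp flip: surj)
  ultimately show ?thesis
    using x hom_in_carrier[OF hom x] by (simp add: grp_center_def)
qed

lemma automorphicI: "\<phi> \<in> iso G G \<Longrightarrow> \<phi> g = h \<Longrightarrow> automorphic G g h"
  unfolding automorphic_def by blast

lemma automorphic_refl: "automorphic G g g"
  using iso_set_refl by (rule automorphicI) simp

context group
begin

lemma inv_mult_cancel_left [simp]: "x \<in> carrier G \<Longrightarrow> y \<in> carrier G \<Longrightarrow> inv x \<otimes> (x \<otimes> y) = y"
  by (simp add: m_assoc[symmetric])

lemma mult_inv_cancel_left [simp]: "x \<in> carrier G \<Longrightarrow> y \<in> carrier G \<Longrightarrow> x \<otimes> (inv x \<otimes> y) = y"
  by (simp add: m_assoc[symmetric])

lemma iso_ord:
  assumes H: "group H" and \<phi>: "\<phi> \<in> iso G H" and x: "x \<in> carrier G"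
  shows "group.ord H (\<phi> x) = ord x"
proof -
  interpret H: group H by (fact H)
  have inj: "inj_on \<phi> (carrier G)"
    using \<phi> by (simp add: iso_iff)
  interpret group_hom G H \<phi>
    using \<phi> by (simp add: group_hom_def group_hom_axioms_def iso_iff is_group H)
  have "\<phi> x [^]\<^bsub>H\<^esub> n = \<one>\<^bsub>H\<^esub> \<longleftrightarrow> ord x dvd n" for n :: nat
  proof -
    have "\<phi> x [^]\<^bsub>H\<^esub> n = \<one>\<^bsub>H\<^esub> \<longleftrightarrow> \<phi> (x [^] n) = \<phi> \<one>"
      using x by (simp add: hom_nat_pow)
    also have "\<dots> \<longleftrightarrow> x [^] n = \<one>"
      using x by (intro inj_on_eq_iff[OF inj]) simp_all
    finally show ?thesis
      using x by (simp add: pow_eq_id)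
  qed
  then show ?thesis
    using x by (simp add: H.ord_unique)
qed

lemma comm_group_if_squares_one:
  assumes sq: "\<And>x. x \<in> carrier G \<Longrightarrow> x \<otimes> x = \<one>"
  shows "comm_group G"
proof (rule group_comm_groupI)
  have inv_self: "inv x = x" if "x \<in> carrier G" for x
    using inv_equality[OF sq[OF that] that that] .
  fix x y assume x: "x \<in> carrier G" and y: "y \<in> carrier G"
  then have "x \<otimes> y = inv (x \<otimes> y)"
    by (simp add: inv_self)
  also have "\<dots> = y \<otimes> x"
    using x y by (simp only: inv_mult_group inv_self)
  finally show "x \<otimes> y = y \<otimes> x" .
qed

lemma conj_in_subgroup_if_commutators:
  assumes M: "subgroup M G"
    and comm: "\<And>x y. x \<in> carrier G \<Longrightarrow> y \<in> carrier G \<Longrightarrow> x \<otimes> y \<otimes> inv x \<otimes> inv y \<in> M"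
    and g: "g \<in> carrier G" and m: "m \<in> M"
  shows "inv g \<otimes> m \<otimes> g \<in> M"
proof -
  have mc: "m \<in> carrier G"
    using m subgroup.subset[OF M] by auto
  have "inv g \<otimes> m \<otimes> g = m \<otimes> (inv m \<otimes> inv g \<otimes> inv (inv m) \<otimes> inv (inv g))"
    using g mc by (simp add: m_assoc)
  also have "\<dots> \<in> M"
    using comm[of "inv m" "inv g"] g mc m subgroup.m_closed[OF M] by simp
  finally show ?thesis .
qed

lemma subgroup_int_pow_mult:
  assumes M: "subgroup M G" and conj: "\<And>g m. g \<in> carrier G \<Longrightarrow> m \<in> M \<Longrightarrow> inv g \<otimes> m \<otimes> g \<in> M"
    and a: "a \<in> carrier G"
  shows "subgroup {a [^] (k::int) \<otimes> m | k m. m \<in> M} G"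
proof (rule subgroupI)
  have Mc: "M \<subseteq> carrier G"
    using subgroup.subset[OF M] .
  show "{a [^] (k::int) \<otimes> m | k m. m \<in> M} \<subseteq> carrier G"
    using a Mc by auto
  show "{a [^] (k::int) \<otimes> m | k m. m \<in> M} \<noteq> {}"
    using subgroup.one_closed[OF M] by blast
next
  fix y assume "y \<in> {a [^] (k::int) \<otimes> m | k m. m \<in> M}"
  then obtain k m where y: "y = a [^] (k::int) \<otimes> m" and m: "m \<in> M"
    by blast
  have mc: "m \<in> carrier G"
    using m subgroup.subset[OF M] by auto
  have "inv y = a [^] (-k) \<otimes> (inv (a [^] (-k)) \<otimes> inv m \<otimes> a [^] (-k))"
    using a mc by (simp add: y inv_mult_group int_pow_neg m_assoc)
  moreover have "inv (a [^] (-k)) \<otimes> inv m \<otimes> a [^] (-k) \<in> M"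
    using conj a m subgroup.m_inv_closed[OF M] by simp
  ultimately show "inv y \<in> {a [^] (k::int) \<otimes> m | k m. m \<in> M}"
    by blast
next
  fix y y' assume "y \<in> {a [^] (k::int) \<otimes> m | k m. m \<in> M}" "y' \<in> {a [^] (k::int) \<otimes> m | k m. m \<in> M}"
  then obtain k m k' m' where y: "y = a [^] (k::int) \<otimes> m" and m: "m \<in> M"
    and y': "y' = a [^] (k'::int) \<otimes> m'" and m': "m' \<in> M"
    by blast
  have mc: "m \<in> carrier G" "m' \<in> carrier G"
    using m m' subgroup.subset[OF M] by auto
  have "y \<otimes> y' = a [^] (k + k') \<otimes> (inv (a [^] k') \<otimes> m \<otimes> a [^] k' \<otimes> m')"
    using a mc by (simp add: y y' m_assoc int_pow_mult)
  moreover have "inv (a [^] k') \<otimes> m \<otimes> a [^] k' \<otimes> m' \<in> M"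
    using conj a m m' subgroup.m_closed[OF M] by simp
  ultimately show "y \<otimes> y' \<in> {a [^] (k::int) \<otimes> m | k m. m \<in> M}"
    by blast
qed

lemma mem_subgroup_if_coprime_int_pow:
  assumes H: "subgroup H G" and x: "x \<in> carrier G"
    and coprime: "coprime k (int (order G))" and xk: "x [^] k \<in> H"
  shows "x \<in> H"
proof -
  obtain u v where uv: "u * k + v * int (order G) = 1"
    using bezout_int[of k "int (order G)"] coprime by auto
  have "x = x [^] (u * k + v * int (order G))"
    using uv x by simp
  also have "\<dots> = (x [^] k) [^] u \<otimes> (x [^] int (order G)) [^] v"
    using x by (simp add: int_pow_mult int_pow_pow mult.commute)
  also have "\<dots> = (x [^] k) [^] u"
    using x by (simp add: int_pow_int pow_order_eq_1)
  finally show ?thesis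
    using subgroup_int_pow_closed[OF H xk, of u] by simp
qed

(* If a = x^p is not in M, then M and a generate G, so x = a^k m and x^(1 - p k) \<in> M;
   as 1 - p k is prime to the order of G, x \<in> M and hence a \<in> M. *)
lemma pow_in_maximal_subgroup:
  assumes order: "order G = p ^ n" and M: "maximal_subgroup M G"
    and comm: "\<And>x y. x \<in> carrier G \<Longrightarrow> y \<in> carrier G \<Longrightarrow> x \<otimes> y \<otimes> inv x \<otimes> inv y \<in> M"
    and x: "x \<in> carrier G"
  shows "x [^] p \<in> M"
proof (rule ccontr)
  define a where "a = x [^] int p"
  assume "x [^] p \<notin> M"
  then have a_notin: "a \<notin> M"
    by (simp add: a_def int_pow_int)
  have sM: "subgroup M G"
    using M by (simp add: maximal_subgroup_def)
  have a: "a \<in> carrier G"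
    using x by (simp add: a_def)
  define S where "S = {a [^] (k::int) \<otimes> m | k m. m \<in> M}"
  have "subgroup S G"
    unfolding S_def
    using subgroup_int_pow_mult[OF sM conj_in_subgroup_if_commutators[OF sM comm] a] .
  moreover have "M \<subseteq> S"
    unfolding S_def using subgroup.subset[OF sM] by (force intro!: exI[of _ "0::int"])
  moreover have "a \<in> S"
    unfolding S_def using a subgroup.one_closed[OF sM] by (intro CollectI exI[of _ 1] exI[of _ \<one>]) simp
  ultimately have "S = carrier G"
    using M a_notin unfolding maximal_subgroup_def by blast
  then obtain k m where xk: "x = a [^] (k::int) \<otimes> m" and m: "m \<in> M"
    using x unfolding S_def by blast
  have mc: "m \<in> carrier G"
    using m subgroup.subset[OF sM] by auto
  have "m = inv (a [^] k) \<otimes> x"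
    using xk a mc by (simp add: m_assoc[symmetric])
  also have "\<dots> = x [^] (- (int p * k)) \<otimes> x [^] (1::int)"
    using x by (simp add: a_def int_pow_pow int_pow_neg)
  also have "\<dots> = x [^] (1 - int p * k)"
    by (simp add: int_pow_mult[OF x, symmetric])
  finally have "x [^] (1 - int p * k) \<in> M"
    using m by simp
  moreover have "coprime (1 - int p * k) (int p)"
  proof (rule coprimeI)
    fix c assume "c dvd 1 - int p * k" and "c dvd int p"
    then have "c dvd (1 - int p * k) + int p * k"
      by (intro dvd_add) simp_all
    then show "is_unit c"
      by simp
  qed
  then have "coprime (1 - int p * k) (int (order G))"
    by (simp add: order)
  ultimately have "x \<in> M"
    using mem_subgroup_if_coprime_int_pow[OF sM x] by blast
  then show False
    using a_notin subgroup_int_pow_closed[OF sM] by (simp add: a_def)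
qed

lemma pow_in_frattini:
  assumes order: "order G = p ^ n" and derived: "derived G (carrier G) \<subseteq> frattini G"
    and x: "x \<in> carrier G"
  shows "x [^] p \<in> frattini G"
proof -
  have "x [^] p \<in> M" if M: "maximal_subgroup M G" for M
  proof (rule pow_in_maximal_subgroup[OF order M _ x])
    fix a b assume "a \<in> carrier G" "b \<in> carrier G"
    then have "a \<otimes> b \<otimes> inv a \<otimes> inv b \<in> derived G (carrier G)"
      unfolding derived_def by (intro generate.incl) blast
    then show "a \<otimes> b \<otimes> inv a \<otimes> inv b \<in> M"
      using derived M unfolding frattini_def by blast
  qed
  then show ?thesis
    using x by (simp add: frattini_def)
qed

lemma crossed_hom_iso:
  assumes fin: "finite (carrier G)" and c: "\<And>x. x \<in> carrier G \<Longrightarrow> c x \<in> carrier G"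
    and cocycle: "\<And>x y. x \<in> carrier G \<Longrightarrow> y \<in> carrier G \<Longrightarrow> c (x \<otimes> y) = inv y \<otimes> c x \<otimes> y \<otimes> c y"
    and kernel: "\<And>x. x \<in> carrier G \<Longrightarrow> x \<otimes> c x = \<one> \<Longrightarrow> x = \<one>"
  shows "(\<lambda>x. x \<otimes> c x) \<in> iso G G"
proof -
  define \<phi> where "\<phi> x = x \<otimes> c x" for x
  have closed: "\<phi> x \<in> carrier G" if "x \<in> carrier G" for x
    using that c by (simp add: \<phi>_def)
  have mult: "\<phi> (x \<otimes> y) = \<phi> x \<otimes> \<phi> y" if x: "x \<in> carrier G" and y: "y \<in> carrier G" for x y
    using x y c by (simp add: \<phi>_def cocycle m_assoc)
  have "c \<one> = \<one>"
    using cocycle[of \<one> \<one>] c[of \<one>] by (simp add: l_cancel_one')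
  have inj: "inj_on \<phi> (carrier G)"
  proof (rule inj_onI)
    fix x y assume x: "x \<in> carrier G" and y: "y \<in> carrier G" and eq: "\<phi> x = \<phi> y"
    have "\<phi> (x \<otimes> inv y) = \<phi> y \<otimes> \<phi> (inv y)"
      using x y eq by (simp add: mult)
    also have "\<dots> = \<phi> (y \<otimes> inv y)"
      using mult[of y "inv y"] y by simp
    also have "\<dots> = \<one>"
      using \<open>c \<one> = \<one>\<close> y by (simp add: \<phi>_def)
    finally have "x \<otimes> inv y = \<one>"
      using kernel x y by (simp add: \<phi>_def)
    then show "x = y"
      using x y by (metis inv_equality inv_inv inv_closed)
  qed
  have "\<phi> ` carrier G = carrier G"
    by (rule endo_inj_surj[OF fin _ inj]) (use closed in auto)
  then show ?thesis
    using closed mult inj unfolding \<phi>_def[abs_def] by (auto simp: iso_iff hom_def)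
qed

lemma automorphic_imp_ord_center:
  assumes "automorphic G g h" and g: "g \<in> carrier G"
  shows "h \<in> carrier G" "ord h = ord g" "h \<in> grp_center G \<longleftrightarrow> g \<in> grp_center G"
proof -
  obtain \<phi> where \<phi>: "\<phi> \<in> iso G G" and h: "h = \<phi> g"
    using assms(1) unfolding automorphic_def by blast
  show "h \<in> carrier G"
    using hom_in_carrier[OF iso_imp_homomorphism[OF \<phi>] g] h by simp
  show "ord h = ord g"
    using iso_ord[OF is_group \<phi> g] h by simp
  show "h \<in> grp_center G \<longleftrightarrow> g \<in> grp_center G"
    using iso_center_iff[OF is_monoid \<phi> g] h by simp
qed

end

section \<open>The quaternion group\<close>

lemma quaternion_mult_assoc:
  "quaternion_mult (quaternion_mult x y) w = quaternion_mult x (quaternion_mult y w)"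
  by (cases x; cases y; cases w; rename_tac a u b v c t; case_tac u; case_tac v; case_tac t)
    (auto simp: quaternion_mult_def)

lemma group_quaternion_group: "group quaternion_group"
proof (rule groupI)
  fix x assume "x \<in> carrier quaternion_group"
  obtain a u where x: "x = (a, u)"
    by fastforce
  have "quaternion_mult (a \<noteq> (u \<noteq> Q1), u) x = (False, Q1)"
    unfolding x by (cases u) (simp_all add: quaternion_mult_def)
  then show "\<exists>y \<in> carrier quaternion_group. y \<otimes>\<^bsub>quaternion_group\<^esub> x = \<one>\<^bsub>quaternion_group\<^esub>"
    by (auto simp: quaternion_group_def)
qed (auto simp: quaternion_group_def quaternion_mult_assoc, simp add: quaternion_mult_def)

lemma quaternion_square_eq_one: "quaternion_mult x x = (False, Q1) \<Longrightarrow> snd x = Q1"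
  by (cases x; rename_tac a u; case_tac u) (simp_all add: quaternion_mult_def)

lemma quaternion_real_central: "(b, Q1) \<in> grp_center quaternion_group"
proof -
  have "quaternion_mult (b, Q1) y = quaternion_mult y (b, Q1)" for y
    by (cases y; rename_tac a u; case_tac u) (auto simp: quaternion_mult_def)
  then show ?thesis
    by (simp add: grp_center_def quaternion_group_def)
qed

fun qunit_bits :: "qunit \<Rightarrow> bool \<times> bool" where
  "qunit_bits Q1 = (False, False)"
| "qunit_bits QI = (True, False)"
| "qunit_bits QJ = (False, True)"
| "qunit_bits QK = (True, True)"

section \<open>Extraspecial 2-groups\<close>

locale extraspecial_2 = group G for G (structure) +
  fixes z :: 'a
  assumes finite_carrier: "finite (carrier G)"
    and center_eq: "grp_center G = {\<one>, z}"
    and z_neq_one: "z \<noteq> \<one>"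
    and commutator_in_center:
      "\<lbrakk>x \<in> carrier G; y \<in> carrier G\<rbrakk> \<Longrightarrow> x \<otimes> y \<otimes> inv x \<otimes> inv y \<in> grp_center G"
    and square_in_center: "x \<in> carrier G \<Longrightarrow> x \<otimes> x \<in> grp_center G"
    and center_neq_carrier: "grp_center G \<noteq> carrier G"
begin

(* x to an exponent in Z/2; exclusive or (\<noteq> on bool) is the addition of exponents *)
definition bpow :: "'a \<Rightarrow> bool \<Rightarrow> 'a" where
  "bpow x b = (if b then x else \<one>)"

definition noncomm :: "'a \<Rightarrow> 'a \<Rightarrow> bool" where
  "noncomm x y \<longleftrightarrow> x \<otimes> y \<noteq> y \<otimes> x"

lemma mem_center_iff: "x \<in> grp_center G \<longleftrightarrow> x = \<one> \<or> x = z"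
  using center_eq by auto

lemma z_closed [simp]: "z \<in> carrier G"
  using center_eq by (auto simp: grp_center_def)

lemma z_central: "x \<in> carrier G \<Longrightarrow> z \<otimes> x = x \<otimes> z"
  using center_eq by (auto simp: grp_center_def)

lemma square_cases: "x \<in> carrier G \<Longrightarrow> x \<otimes> x = \<one> \<or> x \<otimes> x = z"
  using square_in_center by (simp add: mem_center_iff)

lemma z_square: "z \<otimes> z = \<one>"
  using square_cases[OF z_closed] z_neq_one by (metis r_cancel_one' z_closed)

lemma bpow_closed [simp]: "x \<in> carrier G \<Longrightarrow> bpow x b \<in> carrier G"
  by (simp add: bpow_def)

lemma bpow_False [simp]: "bpow x False = \<one>" and bpow_True [simp]: "bpow x True = x"
  by (simp_all add: bpow_def)

lemma bpow_z_central: "x \<in> carrier G \<Longrightarrow> bpow z b \<otimes> x = x \<otimes> bpow z b"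
  by (simp add: bpow_def z_central)

lemma bpow_z_mult: "bpow z a \<otimes> bpow z b = bpow z (a \<noteq> b)"
  by (simp add: bpow_def z_square)

lemma bpow_z_eq_iff [simp]: "bpow z a = bpow z b \<longleftrightarrow> a = b"
  using z_neq_one by (auto simp: bpow_def)

lemma bpow_mult_same:
  assumes "x \<in> carrier G" and "x \<otimes> x = bpow z s"
  shows "bpow x a \<otimes> bpow x b = bpow x (a \<noteq> b) \<otimes> bpow z (s \<and> a \<and> b)"
  using assms by (simp add: bpow_def)

lemma noncomm_sym: "noncomm x y = noncomm y x"
  by (auto simp: noncomm_def)

lemma noncomm_self [simp]: "\<not> noncomm x x"
  by (simp add: noncomm_def)

lemma center_iff_not_noncomm:
  "x \<in> carrier G \<Longrightarrow> x \<in> grp_center G \<longleftrightarrow> (\<forall>y \<in> carrier G. \<not> noncomm x y)"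
  by (simp add: grp_center_def noncomm_def)

lemma commute_twisted:
  assumes x: "x \<in> carrier G" and y: "y \<in> carrier G"
  shows "y \<otimes> x = x \<otimes> y \<otimes> bpow z (noncomm x y)"
proof -
  define c where "c = x \<otimes> y \<otimes> inv x \<otimes> inv y"
  have c_closed: "c \<in> carrier G"
    using x y by (simp add: c_def)
  have xy: "x \<otimes> y = c \<otimes> (y \<otimes> x)"
    using x y by (simp add: c_def m_assoc)
  have c_eq: "c = bpow z (noncomm x y)"
  proof (cases "noncomm x y")
    case True
    with xy x y have "c \<noteq> \<one>"
      by (auto simp: noncomm_def)
    then show ?thesis
      using True commutator_in_center[OF x y] by (simp add: c_def mem_center_iff)
  next
    case False
    with xy x y show ?thesis
      by (simp add: noncomm_def) (metis c_closed m_closed r_cancel_one')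
  qed
  then have "c \<otimes> (x \<otimes> y) = y \<otimes> x"
    using x y xy by (simp add: m_assoc[symmetric] bpow_z_mult)
  then show ?thesis
    using x y c_eq by (simp add: bpow_z_central)
qed

lemma conj_eq:
  assumes "x \<in> carrier G" and "y \<in> carrier G"
  shows "inv y \<otimes> x \<otimes> y = x \<otimes> bpow z (noncomm x y)"
  using commute_twisted[OF assms(2,1)] assms by (simp add: m_assoc noncomm_sym)

lemma noncomm_mult_left:
  assumes x: "x \<in> carrier G" and y: "y \<in> carrier G" and k: "k \<in> carrier G"
  shows "noncomm (x \<otimes> y) k \<longleftrightarrow> noncomm x k \<noteq> noncomm y k"
proof -
  have "k \<otimes> (x \<otimes> y) = k \<otimes> x \<otimes> y"
    using x y k by (simp add: m_assoc)
  also have "\<dots> = x \<otimes> (k \<otimes> y) \<otimes> bpow z (noncomm x k)"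
    using x y k by (simp add: commute_twisted[OF x k] m_assoc bpow_z_central)
  also have "\<dots> = x \<otimes> y \<otimes> k \<otimes> bpow z (noncomm x k \<noteq> noncomm y k)"
    using x y k by (simp add: commute_twisted[OF y k] m_assoc bpow_z_mult) blast
  finally have "k \<otimes> (x \<otimes> y) = x \<otimes> y \<otimes> k \<otimes> bpow z (noncomm x k \<noteq> noncomm y k)" .
  moreover have "noncomm (x \<otimes> y) k \<longleftrightarrow> k \<otimes> (x \<otimes> y) \<noteq> x \<otimes> y \<otimes> k"
    by (auto simp: noncomm_def)
  ultimately show ?thesis
    using x y k z_neq_one by (cases "noncomm x k \<noteq> noncomm y k") (auto simp: m_assoc)
qed

lemma noncomm_mult_right:
  "\<lbrakk>x \<in> carrier G; y \<in> carrier G; k \<in> carrier G\<rbrakk> \<Longrightarrow> noncomm k (x \<otimes> y) \<longleftrightarrow> noncomm k x \<noteq> noncomm k y"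
  using noncomm_mult_left by (simp add: noncomm_sym)

lemma noncomm_one [simp]: "\<not> noncomm \<one> k" "\<not> noncomm k \<one>" if "k \<in> carrier G"
  using that by (simp_all add: noncomm_def)

lemma noncomm_z [simp]: "k \<in> carrier G \<Longrightarrow> \<not> noncomm z k"
  by (simp add: noncomm_def z_central)

lemma noncomm_bpow [simp]: "noncomm (bpow x b) k \<longleftrightarrow> b \<and> noncomm x k" if "k \<in> carrier G"
  using that by (simp add: bpow_def)

lemma noncomm_inv_left:
  assumes "x \<in> carrier G" and "k \<in> carrier G"
  shows "noncomm (inv x) k \<longleftrightarrow> noncomm x k"
  using noncomm_mult_left[of "inv x" x k] assms by auto

lemma bpow_commute:
  assumes "x \<in> carrier G" and "y \<in> carrier G"
  shows "bpow y c \<otimes> bpow x b = bpow x b \<otimes> bpow y c \<otimes> bpow z (b \<and> c \<and> noncomm x y)"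
proof -
  have "noncomm (bpow x b) (bpow y c) \<longleftrightarrow> b \<and> c \<and> noncomm x y"
    using assms by (cases b; cases c) simp_all
  then show ?thesis
    using commute_twisted[of "bpow x b" "bpow y c"] assms by simp
qed

lemma ord_eq:
  assumes x: "x \<in> carrier G"
  shows "ord x = (if x = \<one> then 1 else if x \<otimes> x = \<one> then 2 else 4)"
proof -
  have pow2: "x [^] (2::nat) = x \<otimes> x"
    using x by (simp add: numeral_2_eq_2)
  have pow4: "x [^] (4::nat) = (x \<otimes> x) \<otimes> (x \<otimes> x)"
    using x by (simp add: numeral_eq_Suc m_assoc)
  consider "x = \<one>" | "x \<noteq> \<one>" "x \<otimes> x = \<one>" | "x \<otimes> x = z"
    using square_cases[OF x] by blast
  then show ?thesis
  proof cases
    case 2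
    then have "ord x dvd 2" "ord x \<noteq> 1"
      using x pow2 ord_eq_1[OF x] by (simp_all add: pow_eq_id[symmetric])
    then have "0 < ord x" "ord x \<le> 2" "ord x \<noteq> 1"
      using dvd_pos_nat[of 2 "ord x"] by (auto simp: dvd_imp_le)
    then show ?thesis
      using 2 by simp
  next
    case 3
    then have "ord x dvd 4" "\<not> ord x dvd 2"
      using x pow2 pow4 z_square z_neq_one by (simp_all add: pow_eq_id[symmetric])
    then have "0 < ord x" "ord x \<le> 4" "ord x \<noteq> 1" "ord x \<noteq> 2" "ord x \<noteq> 3"
      using dvd_pos_nat[of 4 "ord x"] by (auto simp: dvd_imp_le)
    then show ?thesis
      using 3 z_neq_one by simp
  qed simp
qed

lemma exists_square_neq_one: "\<exists>x \<in> carrier G. x \<notin> grp_center G \<and> x \<otimes> x \<noteq> \<one>"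
proof (rule ccontr)
  assume "\<not> ?thesis"
  then have "x \<otimes> x = \<one>" if "x \<in> carrier G" for x
    using that z_square by (cases "x \<in> grp_center G") (auto simp: mem_center_iff)
  then interpret comm_group G
    by (rule comm_group_if_squares_one)
  have "grp_center G = carrier G"
    by (auto simp: grp_center_def m_comm)
  then show False
    using center_neq_carrier by contradiction
qed

end

lemma extraspecial_2_if_extraspecial_p_group:
  fixes G (structure)
  assumes "extraspecial_p_group G 2"
  obtains z where "extraspecial_2 G z"
proof -
  have "group G" and fin: "finite (carrier G)" and order: "\<exists>n. order G = 2 ^ n"
    and center_derived: "grp_center G = derived G (carrier G)"
    and derived_frattini: "derived G (carrier G) = frattini G"
    and card_center: "card (grp_center G) = 2"
    using assms by (auto simp: extraspecial_p_group_def special_p_group_def p_group_def)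
  interpret group G by fact
  obtain z where center: "grp_center G = {\<one>, z}" and z: "z \<noteq> \<one>"
  proof -
    obtain a b where ab: "grp_center G = {a, b}" "a \<noteq> b"
      using card_center by (auto simp: card_2_iff)
    moreover have "\<one> \<in> grp_center G"
      by (simp add: grp_center_def)
    ultimately show ?thesis
      using that by (metis insert_commute insertE singletonD)
  qed
  have "x \<otimes> y \<otimes> inv x \<otimes> inv y \<in> grp_center G" if "x \<in> carrier G" "y \<in> carrier G" for x y
    unfolding center_derived derived_def using that by (intro generate.incl) blast
  moreover have "x \<otimes> x \<in> grp_center G" if "x \<in> carrier G" for x
    using pow_in_frattini[of 2 _ x] order that center_derived derived_frattini
    by (auto simp: numeral_2_eq_2)
  moreover have "grp_center G \<noteq> carrier G"
  proof
    assume "grp_center G = carrier G"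
    then interpret comm_group G
      by (intro group_comm_groupI) (auto simp: grp_center_def)
    have "grp_center G = {\<one>}"
      using center_derived derived_eq_singleton[of "carrier G"] by simp
    with center z show False
      by auto
  qed
  ultimately have "extraspecial_2 G z"
    using fin center z by unfold_locales auto
  then show ?thesis
    by (rule that)
qed

section \<open>Words in two elements and automorphisms\<close>

locale extraspecial_2_pair = extraspecial_2 +
  fixes u v :: 'a and s t :: bool
  assumes u_closed [simp]: "u \<in> carrier G" and v_closed [simp]: "v \<in> carrier G"
    and u_square: "u \<otimes> u = bpow z s" and v_square: "v \<otimes> v = bpow z t"
begin

definition word :: "bool \<Rightarrow> bool \<Rightarrow> bool \<Rightarrow> 'a" where
  "word p q r = bpow u p \<otimes> bpow v q \<otimes> bpow z r"

lemma word_closed [simp]: "word p q r \<in> carrier G"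
  by (simp add: word_def)

lemma word_mult:
  "word p q r \<otimes> word p' q' r' = word (p \<noteq> p') (q \<noteq> q')
     ((((r \<noteq> r') \<noteq> (s \<and> p \<and> p')) \<noteq> (t \<and> q \<and> q')) \<noteq> (q \<and> p' \<and> noncomm u v))"
proof -
  let ?U = "bpow u p" and ?V = "bpow v q" and ?U' = "bpow u p'" and ?V' = "bpow v q'"
  have "word p q r \<otimes> word p' q' r' = ?U \<otimes> (?V \<otimes> (bpow z r \<otimes> (?U' \<otimes> ?V')) \<otimes> bpow z r')"
    by (simp add: word_def m_assoc)
  also have "\<dots> = ?U \<otimes> (?V \<otimes> ?U') \<otimes> ?V' \<otimes> bpow z (r \<noteq> r')"
    using bpow_z_central[of "?U' \<otimes> ?V'" r] by (simp add: m_assoc bpow_z_mult)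
  also have "\<dots> = (?U \<otimes> ?U') \<otimes> (?V \<otimes> ?V') \<otimes> bpow z ((r \<noteq> r') \<noteq> (q \<and> p' \<and> noncomm u v))"
    using bpow_z_central[of "?V'" "p' \<and> q \<and> noncomm u v"]
    by (simp add: bpow_commute[of u v] m_assoc bpow_z_mult) auto
  also have "\<dots> = bpow u (p \<noteq> p') \<otimes> (bpow z (s \<and> p \<and> p') \<otimes> bpow v (q \<noteq> q')) \<otimes>
      bpow z (t \<and> q \<and> q') \<otimes> bpow z ((r \<noteq> r') \<noteq> (q \<and> p' \<and> noncomm u v))"
    by (simp add: bpow_mult_same[OF u_closed u_square] bpow_mult_same[OF v_closed v_square] m_assoc)
  also have "\<dots> = bpow u (p \<noteq> p') \<otimes> bpow v (q \<noteq> q') \<otimes>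
      (bpow z (s \<and> p \<and> p') \<otimes> bpow z (t \<and> q \<and> q') \<otimes> bpow z ((r \<noteq> r') \<noteq> (q \<and> p' \<and> noncomm u v)))"
    by (simp only: bpow_z_central[of "bpow v (q \<noteq> q')"] bpow_closed v_closed) (simp add: m_assoc)
  also have "\<dots> = word (p \<noteq> p') (q \<noteq> q')
     ((((r \<noteq> r') \<noteq> (s \<and> p \<and> p')) \<noteq> (t \<and> q \<and> q')) \<noteq> (q \<and> p' \<and> noncomm u v))"
    by (simp add: word_def bpow_z_mult) auto
  finally show ?thesis .
qed

lemma word_mult_z: "word p q r \<otimes> bpow z c = word p q (r \<noteq> c)"
  by (simp add: word_def m_assoc bpow_z_mult)

lemma noncomm_word:
  "k \<in> carrier G \<Longrightarrow> noncomm (word p q r) k \<longleftrightarrow> (p \<and> noncomm u k) \<noteq> (q \<and> noncomm v k)"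
  by (simp add: word_def noncomm_mult_left)

(* The factor c(x) = u^P v^Q z^T depends on x only through the linear forms noncomm x u and
   noncomm x v; the hypotheses on P, Q and T are what the cocycle identity of crossed_hom_iso
   amounts to. *)
lemma word_automorphism:
  fixes P Q T :: "bool \<Rightarrow> bool \<Rightarrow> bool"
  assumes uv: "\<not> noncomm u v" and t: "\<not> t"
    and zero: "\<not> P False False" "\<not> Q False False" "\<not> T False False"
    and P_add: "\<And>a b a' b'. P (a \<noteq> a') (b \<noteq> b') \<longleftrightarrow> P a b \<noteq> P a' b'"
    and Q_add: "\<And>a b a' b'. Q (a \<noteq> a') (b \<noteq> b') \<longleftrightarrow> Q a b \<noteq> Q a' b'"
    and T_add: "\<And>a b a' b'. T (a \<noteq> a') (b \<noteq> b') \<longleftrightarrow>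
      ((T a b \<noteq> ((P a b \<and> a') \<noteq> (Q a b \<and> b'))) \<noteq> T a' b') \<noteq> (s \<and> P a b \<and> P a' b')"
  shows "(\<lambda>x. x \<otimes> word (P (noncomm x u) (noncomm x v)) (Q (noncomm x u) (noncomm x v))
                        (T (noncomm x u) (noncomm x v))) \<in> iso G G"
proof (rule crossed_hom_iso[OF finite_carrier])
  define c where "c x = word (P (noncomm x u) (noncomm x v)) (Q (noncomm x u) (noncomm x v))
                        (T (noncomm x u) (noncomm x v))" for x
  have noncomm_c: "noncomm (c x) y \<longleftrightarrow> (P (noncomm x u) (noncomm x v) \<and> noncomm y u) \<noteq>
      (Q (noncomm x u) (noncomm x v) \<and> noncomm y v)" if "y \<in> carrier G" for x y
    using that by (simp add: c_def noncomm_word noncomm_sym[of u y] noncomm_sym[of v y])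
  show c_closed: "c x \<in> carrier G" for x
    by (simp add: c_def)
  show "c (x \<otimes> y) = inv y \<otimes> c x \<otimes> y \<otimes> c y" if x: "x \<in> carrier G" and y: "y \<in> carrier G" for x y
  proof -
    have xor_False: "(a \<noteq> (False \<and> b)) = a" "(a \<noteq> (b \<and> c \<and> False)) = a" for a b c :: bool
      by simp_all
    have "inv y \<otimes> c x \<otimes> y \<otimes> c y = c x \<otimes> bpow z (noncomm (c x) y) \<otimes> c y"
      using y by (simp add: conj_eq c_def)
    also have "\<dots> = c (x \<otimes> y)"
      unfolding noncomm_c[OF y]
      unfolding c_def noncomm_mult_left[OF x y u_closed] noncomm_mult_left[OF x y v_closed]
      using uv t by (simp only: word_mult_z word_mult P_add Q_add T_add xor_False)
    finally show ?thesis ..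
  qed
  show "x = \<one>" if x: "x \<in> carrier G" and triv: "x \<otimes> c x = \<one>" for x
  proof -
    have inv_c: "inv (c x) = x"
      using inv_equality[OF triv c_closed[of x] x] .
    have "noncomm x u \<longleftrightarrow> noncomm (c x) u" "noncomm x v \<longleftrightarrow> noncomm (c x) v"
      using noncomm_inv_left[OF c_closed[of x] u_closed] noncomm_inv_left[OF c_closed[of x] v_closed]
      unfolding inv_c by simp_all
    then have "\<not> noncomm x u" "\<not> noncomm x v"
      using noncomm_c[OF u_closed, of x] noncomm_c[OF v_closed, of x] uv noncomm_sym[of u v]
        noncomm_self[of u] noncomm_self[of v]
      by blast+
    then have "c x = \<one>"
      using zero by (simp add: c_def word_def)
    then show ?thesis
      using triv x by simp
  qed
qed

end

context extraspecial_2
begin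

lemma automorphic_if_noncomm:
  assumes g: "g \<in> carrier G" and h: "h \<in> carrier G" and sq: "g \<otimes> g = h \<otimes> h" and gh: "noncomm g h"
  shows "automorphic G g h"
proof -
  define a where "a = g \<otimes> inv h"
  have a: "a \<in> carrier G"
    using g h by (simp add: a_def)
  have g_a: "noncomm g a" and g_inv_h: "noncomm g (inv h)"
    using g h gh
    by (simp_all add: a_def noncomm_mult_right noncomm_sym[of g "inv h"] noncomm_inv_left noncomm_sym[of h g])
  have "a \<otimes> a = g \<otimes> (inv h \<otimes> g) \<otimes> inv h"
    using g h by (simp add: a_def m_assoc)
  also have "\<dots> = (g \<otimes> g) \<otimes> (inv h \<otimes> inv h) \<otimes> z"
    using g h g_inv_h by (simp add: commute_twisted[of g "inv h"] m_assoc z_central[of "inv h"])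
  also have "\<dots> = z"
    using g h sq by (simp add: inv_mult_group[symmetric])
  finally have aa: "a \<otimes> a = z" .
  interpret extraspecial_2_pair G z a \<one> True False
    by unfold_locales (simp_all add: a aa)
  have "(\<lambda>x. x \<otimes> word (noncomm x a) False False) \<in> iso G G"
    by (rule word_automorphism[where P="\<lambda>a _. a" and Q="\<lambda>_ _. False" and T="\<lambda>_ _. False"]) auto
  moreover have "g \<otimes> a = h"
    using g h sq by (simp add: a_def m_assoc[symmetric]) (simp add: m_assoc)
  then have "g \<otimes> word (noncomm g a) False False = h"
    using g_a a by (simp add: word_def)
  ultimately show ?thesis
    by (auto intro: automorphicI)
qed

lemma automorphic_mult_z:
  assumes g: "g \<in> carrier G" and g_noncentral: "g \<notin> grp_center G"
  shows "automorphic G g (g \<otimes> z)"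
proof -
  obtain k where k: "k \<in> carrier G" and g_k: "noncomm g k"
    using g g_noncentral center_iff_not_noncomm by blast
  define s where "s = (k \<otimes> k = z)"
  have kk: "k \<otimes> k = bpow z s"
    using square_cases[OF k] z_neq_one by (auto simp: bpow_def s_def)
  interpret extraspecial_2_pair G z k \<one> s False
    by unfold_locales (simp_all add: k kk)
  have "(\<lambda>x. x \<otimes> word False False (noncomm x k)) \<in> iso G G"
    by (rule word_automorphism[where P="\<lambda>_ _. False" and Q="\<lambda>_ _. False" and T="\<lambda>a _. a"]) auto
  moreover have "g \<otimes> word False False (noncomm g k) = g \<otimes> z"
    using g g_k by (simp add: word_def)
  ultimately show ?thesis
    by (auto intro: automorphicI)
qed

lemma exists_noncomm_not_noncomm:
  assumes x: "x \<in> carrier G" and y: "y \<in> carrier G"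
    and x_noncentral: "x \<notin> grp_center G" and xy_noncentral: "x \<otimes> y \<notin> grp_center G"
  shows "\<exists>w \<in> carrier G. noncomm x w \<and> \<not> noncomm y w"
proof (rule ccontr)
  assume "\<not> ?thesis"
  then have xy: "\<And>w. w \<in> carrier G \<Longrightarrow> \<not> noncomm y w \<Longrightarrow> \<not> noncomm x w"
    by blast
  obtain w1 where w1: "w1 \<in> carrier G" "noncomm x w1"
    using x x_noncentral center_iff_not_noncomm by blast
  then have y_w1: "noncomm y w1"
    using xy by blast
  have "noncomm x w \<longleftrightarrow> noncomm y w" if w: "w \<in> carrier G" for w
  proof (cases "noncomm y w")
    case True
    then have "\<not> noncomm y (w \<otimes> w1)"
      using y_w1 w w1 y by (simp add: noncomm_mult_right)
    then have "\<not> noncomm x (w \<otimes> w1)"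
      using xy w w1 by simp
    then show ?thesis
      using True w w1 x by (simp add: noncomm_mult_right)
  qed (use xy w in blast)
  then have "x \<otimes> y \<in> grp_center G"
    using x y by (simp add: center_iff_not_noncomm noncomm_mult_left)
  with xy_noncentral show False ..
qed

lemma automorphic_if_comm:
  assumes g: "g \<in> carrier G" and h: "h \<in> carrier G" and sq: "g \<otimes> g = h \<otimes> h"
    and gh: "\<not> noncomm g h" and g_noncentral: "g \<notin> grp_center G" and h_noncentral: "h \<notin> grp_center G"
    and e_noncentral: "inv g \<otimes> h \<notin> grp_center G"
  shows "automorphic G g h"
proof -
  define e where "e = inv g \<otimes> h"
  have e: "e \<in> carrier G"
    using g h by (simp add: e_def)
  have g_e: "\<not> noncomm g e"
    using g h gh by (simp add: e_def noncomm_mult_right noncomm_sym[of g "inv g"] noncomm_inv_left)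
  have ge: "g \<otimes> e = h"
    using g h by (simp add: e_def m_assoc[symmetric])
  have "e \<otimes> e = inv g \<otimes> (h \<otimes> inv g) \<otimes> h"
    using g h by (simp add: e_def m_assoc)
  also have "\<dots> = (inv g \<otimes> inv g) \<otimes> (h \<otimes> h)"
    using g h gh by (simp add: commute_twisted[of "inv g" h] noncomm_inv_left m_assoc)
  also have "\<dots> = \<one>"
    using g h sq by (simp add: inv_mult_group[symmetric])
  finally have ee: "e \<otimes> e = \<one>" .
  obtain w where w: "w \<in> carrier G" and g_w: "noncomm g w" and e_w: "\<not> noncomm e w"
    using exists_noncomm_not_noncomm[OF g e g_noncentral] ge h_noncentral by auto
  define s where "s = (w \<otimes> w = z)"
  have ww: "w \<otimes> w = bpow z s"
    using square_cases[OF w] z_neq_one by (auto simp: bpow_def s_def)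
  interpret extraspecial_2_pair G z w e s False
    by unfold_locales (simp_all add: e w ee ww)
  \<comment> \<open>g commutes with e but not with w, so this automorphism sends g to g e = h\<close>
  have "(\<lambda>x. x \<otimes> word (noncomm x e) (noncomm x w \<noteq> (noncomm x e \<and> s)) (noncomm x w \<and> noncomm x e))
    \<in> iso G G"
    using e_w noncomm_sym[of e w]
    by (intro word_automorphism[where P="\<lambda>_ b. b" and Q="\<lambda>a b. a \<noteq> (b \<and> s)" and T="\<lambda>a b. a \<and> b"]) auto
  moreover have "g \<otimes> word (noncomm g e) (noncomm g w \<noteq> (noncomm g e \<and> s)) (noncomm g w \<and> noncomm g e) = h"
    using g_e g_w ge by (simp add: word_def)
  ultimately show ?thesis
    by (auto intro: automorphicI)
qed

section \<open>Orbits of the automorphism group\<close>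

lemma automorphic_iff:
  assumes g: "g \<in> carrier G" and h: "h \<in> carrier G"
  shows "automorphic G g h \<longleftrightarrow> ord g = ord h \<and> (g \<in> grp_center G \<longleftrightarrow> h \<in> grp_center G)"
proof
  assume "automorphic G g h"
  then show "ord g = ord h \<and> (g \<in> grp_center G \<longleftrightarrow> h \<in> grp_center G)"
    using automorphic_imp_ord_center[OF _ g] by simp
next
  assume same: "ord g = ord h \<and> (g \<in> grp_center G \<longleftrightarrow> h \<in> grp_center G)"
  show "automorphic G g h"
  proof (cases "g \<in> grp_center G")
    case True
    then have "g = h"
      using same ord_eq[of z] z_neq_one z_square by (auto simp: mem_center_iff)
    then show ?thesis
      by (simp add: automorphic_refl)
  next
    case g_noncentral: False
    then have h_noncentral: "h \<notin> grp_center G"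
      using same by simp
    have "g \<noteq> \<one>" "h \<noteq> \<one>"
      using g_noncentral h_noncentral by (auto simp: mem_center_iff)
    then have sq: "g \<otimes> g = h \<otimes> h"
      using same ord_eq[OF g] ord_eq[OF h] square_cases[OF g] square_cases[OF h] z_neq_one
      by (auto split: if_splits)
    consider "noncomm g h" | "\<not> noncomm g h" "inv g \<otimes> h = \<one>" | "\<not> noncomm g h" "inv g \<otimes> h = z"
      | "\<not> noncomm g h" "inv g \<otimes> h \<notin> grp_center G"
      by (auto simp: mem_center_iff)
    then show ?thesis
    proof cases
      case 1
      then show ?thesis
        using automorphic_if_noncomm[OF g h sq] by simp
    next
      case 2
      then have "h = g"
        using g h by (metis inv_equality inv_inv inv_closed)
      then show ?thesis
        by (simp add: automorphic_refl)
    next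
      case 3
      then have "h = g \<otimes> z"
        using g h by (metis mult_inv_cancel_left)
      then show ?thesis
        using automorphic_mult_z[OF g g_noncentral] by simp
    next
      case 4
      then show ?thesis
        using automorphic_if_comm[OF g h sq] g_noncentral h_noncentral by simp
    qed
  qed
qed

lemma aut_orbit_eq:
  assumes g: "g \<in> carrier G"
  shows "{\<phi> g | \<phi>. \<phi> \<in> iso G G} =
    {h \<in> carrier G. (ord h, h \<in> grp_center G) = (ord g, g \<in> grp_center G)}"
proof -
  have "{\<phi> g | \<phi>. \<phi> \<in> iso G G} = {h \<in> carrier G. automorphic G g h}"
    using automorphic_imp_ord_center(1)[OF _ g] unfolding automorphic_def by blast
  then show ?thesis
    using automorphic_iff[OF g] by auto
qed

lemma card_aut_orbits_eq_card_ord_center: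
  "card (aut_orbits G) = card ((\<lambda>g. (ord g, g \<in> grp_center G)) ` carrier G)"
proof -
  have "aut_orbits G = (\<lambda>g. {h \<in> carrier G. (ord h, h \<in> grp_center G) = (ord g, g \<in> grp_center G)}) ` carrier G"
    unfolding aut_orbits_def using aut_orbit_eq by (rule image_cong[OF refl])
  then show ?thesis
    by (simp only: card_image_fibers)
qed

lemma ord_center_image:
  "(\<lambda>g. (ord g, g \<in> grp_center G)) ` carrier G =
    {(1, True), (2, True), (4, False)} \<union>
    (if \<exists>x \<in> carrier G. x \<notin> grp_center G \<and> x \<otimes> x = \<one> then {(2, False)} else {})"
  (is "?L = ?R")
proof
  have ord_z: "ord z = 2"
    using ord_eq[of z] z_neq_one z_square by simp
  show "?L \<subseteq> ?R"
  proof (rule image_subsetI)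
    fix g assume g: "g \<in> carrier G"
    consider "g = \<one>" | "g = z" | "g \<notin> grp_center G" "g \<otimes> g = \<one>" | "g \<notin> grp_center G" "g \<otimes> g \<noteq> \<one>"
      by (auto simp: mem_center_iff)
    then show "(ord g, g \<in> grp_center G) \<in> ?R"
      by cases (use g ord_z ord_eq[OF g] in \<open>auto simp: mem_center_iff\<close>)
  qed
  obtain y where y: "y \<in> carrier G" "y \<notin> grp_center G" "y \<otimes> y \<noteq> \<one>"
    using exists_square_neq_one by blast
  have "(1, True) \<in> ?L"
    by (rule image_eqI[where x=\<one>]) (simp_all add: mem_center_iff)
  moreover have "(2, True) \<in> ?L"
    by (rule image_eqI[where x=z]) (simp_all add: mem_center_iff ord_z)
  moreover have "(4, False) \<in> ?L"
    by (rule image_eqI[where x=y]) (use y ord_eq[OF y(1)] in \<open>auto simp: mem_center_iff\<close>)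
  moreover have "(2, False) \<in> ?L" if "x \<in> carrier G" "x \<notin> grp_center G" "x \<otimes> x = \<one>" for x
    by (rule image_eqI[where x=x]) (use that ord_eq[OF that(1)] in \<open>auto simp: mem_center_iff\<close>)
  ultimately show "?R \<subseteq> ?L"
    by auto
qed

end

section \<open>Recognising the quaternion group\<close>

locale extraspecial_2_quaternion = extraspecial_2 +
  fixes i j :: 'a
  assumes i_closed [simp]: "i \<in> carrier G" and j_closed [simp]: "j \<in> carrier G"
    and i_square: "i \<otimes> i = z" and j_square: "j \<otimes> j = z" and i_j: "noncomm i j"
    and involution_central: "\<And>x. x \<in> carrier G \<Longrightarrow> x \<otimes> x = \<one> \<Longrightarrow> x \<in> grp_center G"
begin

sublocale extraspecial_2_pair G z i j True True
  by unfold_locales (simp_all add: i_square j_square)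

lemma word_eq_iff: "word p q r = word p' q' r' \<longleftrightarrow> p = p' \<and> q = q' \<and> r = r'"
proof
  assume eq: "word p q r = word p' q' r'"
  have "noncomm (word p q r) i = q" "noncomm (word p q r) j = p" for p q r
    using i_j noncomm_sym[of j i] by (simp_all add: noncomm_word)
  then have "p = p'" "q = q'"
    using eq by metis+
  with eq show "p = p' \<and> q = q' \<and> r = r'"
    by (simp add: word_def m_assoc)
qed simp

lemma central_if_commutes_with_i_j:
  assumes y: "y \<in> carrier G" and y_i: "\<not> noncomm y i" and y_j: "\<not> noncomm y j"
  shows "y \<in> grp_center G"
proof (rule ccontr)
  assume y_noncentral: "y \<notin> grp_center G"
  then have "y \<otimes> y = z"
    using square_cases[OF y] involution_central[OF y] by auto
  have i_y: "i \<otimes> y = y \<otimes> i"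
    using y_i by (simp add: noncomm_def)
  have "(y \<otimes> i) \<otimes> (y \<otimes> i) = y \<otimes> (i \<otimes> y) \<otimes> i"
    using y by (simp add: m_assoc)
  also have "\<dots> = (y \<otimes> y) \<otimes> (i \<otimes> i)"
    using y by (simp only: i_y) (simp add: m_assoc)
  also have "\<dots> = \<one>"
    using \<open>y \<otimes> y = z\<close> by (simp add: i_square z_square)
  finally have "(y \<otimes> i) \<otimes> (y \<otimes> i) = \<one>" .
  then have "y \<otimes> i \<in> grp_center G"
    using y by (simp add: involution_central)
  moreover have "noncomm (y \<otimes> i) j"
    using y y_j i_j by (simp add: noncomm_mult_left)
  ultimately show False
    using y by (simp add: center_iff_not_noncomm)
qed

lemma exists_word:
  assumes x: "x \<in> carrier G"
  shows "\<exists>p q r. x = word p q r"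
proof -
  define p q where "p = noncomm x j" and "q = noncomm x i"
  define y where "y = x \<otimes> inv (word p q False)"
  have y: "y \<in> carrier G"
    using x by (simp add: y_def)
  have "\<not> noncomm y i" "\<not> noncomm y j"
    using x i_j noncomm_sym[of j i]
    by (simp_all add: y_def p_def q_def noncomm_mult_left noncomm_inv_left noncomm_word)
  then have "y \<in> grp_center G"
    using central_if_commutes_with_i_j[OF y] by simp
  then obtain r where r: "y = bpow z r"
    unfolding mem_center_iff by (metis bpow_False bpow_True)
  have "x = y \<otimes> word p q False"
    using x by (simp add: y_def m_assoc)
  also have "\<dots> = word p q r"
    using r by (simp add: bpow_z_central word_mult_z)
  finally show ?thesis
    by blast
qed

(* The sign a and the unit i^b j^c (with k = i j) are sent to z^a i^b j^c. *)
definition quaternion_embedding :: "bool \<times> qunit \<Rightarrow> 'a" where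
  "quaternion_embedding x = word (fst (qunit_bits (snd x))) (snd (qunit_bits (snd x))) (fst x)"

lemma quaternion_embedding_mult:
  "quaternion_embedding (quaternion_mult x y) = quaternion_embedding x \<otimes> quaternion_embedding y"
  using i_j
  by (cases x; cases y; rename_tac a u b v; case_tac u; case_tac v)
    (simp_all add: quaternion_embedding_def quaternion_mult_def word_mult)

lemma bij_quaternion_embedding: "bij_betw quaternion_embedding UNIV (carrier G)"
proof (rule bij_betw_imageI)
  have "inj qunit_bits"
    by (rule injI) (rename_tac u v, case_tac u; case_tac v; simp)
  show "inj quaternion_embedding"
  proof (rule injI)
    fix x y assume "quaternion_embedding x = quaternion_embedding y"
    then have bits: "qunit_bits (snd x) = qunit_bits (snd y)" and "fst x = fst y"
      by (simp_all add: quaternion_embedding_def word_eq_iff prod_eq_iff del: prod.inject)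
    then show "x = y"
      using injD[OF \<open>inj qunit_bits\<close> bits] by (simp add: prod_eq_iff)
  qed
  have word_in_range: "word p q r \<in> range quaternion_embedding" for p q r
  proof -
    define u where "u = (if p then if q then QK else QI else if q then QJ else Q1)"
    have "qunit_bits u = (p, q)"
      by (cases p; cases q) (simp_all add: u_def)
    then have "word p q r = quaternion_embedding (r, u)"
      by (simp add: quaternion_embedding_def)
    then show ?thesis
      by blast
  qed
  show "range quaternion_embedding = carrier G"
  proof
    show "range quaternion_embedding \<subseteq> carrier G"
      by (auto simp: quaternion_embedding_def)
    show "carrier G \<subseteq> range quaternion_embedding"
      using exists_word word_in_range by blast
  qed
qed

lemma iso_quaternion_group: "G \<cong> quaternion_group"
proof -
  have "quaternion_embedding \<in> iso quaternion_group G"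
    using bij_quaternion_embedding
    by (intro isoI homI) (auto simp: quaternion_group_def quaternion_embedding_mult bij_betw_def)
  then show ?thesis
    by (rule group.iso_sym[OF group_quaternion_group is_isoI])
qed

end

context extraspecial_2
begin

lemma involution_central_if_iso_quaternion:
  assumes "G \<cong> quaternion_group" and x: "x \<in> carrier G" and xx: "x \<otimes> x = \<one>"
  shows "x \<in> grp_center G"
proof -
  obtain \<phi> where \<phi>: "\<phi> \<in> iso G quaternion_group"
    using assms(1) by (auto simp: is_iso_def)
  have hom: "\<phi> \<in> hom G quaternion_group"
    using \<phi> by (rule iso_imp_homomorphism)
  have "quaternion_mult (\<phi> x) (\<phi> x) = \<phi> \<one>"
    using hom_mult[OF hom x x] xx by (simp add: quaternion_group_def)
  also have "\<dots> = (False, Q1)"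
    using hom_one[OF hom is_group group_quaternion_group] by (simp add: quaternion_group_def)
  finally have "quaternion_mult (\<phi> x) (\<phi> x) = (False, Q1)" .
  then have "\<phi> x \<in> grp_center quaternion_group"
    using quaternion_real_central[of "fst (\<phi> x)"] quaternion_square_eq_one by (metis prod.collapse)
  then show ?thesis
    using iso_center_iff[OF is_monoid \<phi> x] by simp
qed

lemma iso_quaternion_iff:
  "G \<cong> quaternion_group \<longleftrightarrow> (\<forall>x \<in> carrier G. x \<otimes> x = \<one> \<longrightarrow> x \<in> grp_center G)"
proof
  assume "G \<cong> quaternion_group"
  then show "\<forall>x \<in> carrier G. x \<otimes> x = \<one> \<longrightarrow> x \<in> grp_center G"
    using involution_central_if_iso_quaternion by blast
next
  assume involution_central: "\<forall>x \<in> carrier G. x \<otimes> x = \<one> \<longrightarrow> x \<in> grp_center G"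
  have "grp_center G \<subseteq> carrier G"
    by (auto simp: grp_center_def)
  then obtain i where i: "i \<in> carrier G" "i \<notin> grp_center G"
    using center_neq_carrier by blast
  then obtain j where j: "j \<in> carrier G" "noncomm i j"
    using center_iff_not_noncomm by blast
  then have "j \<notin> grp_center G"
    using i center_iff_not_noncomm noncomm_sym by blast
  then have "i \<otimes> i = z" "j \<otimes> j = z"
    using i j involution_central square_cases by blast+
  then interpret extraspecial_2_quaternion G z i j
    using i j involution_central by unfold_locales auto
  show "G \<cong> quaternion_group"
    by (rule iso_quaternion_group)
qed

lemma card_aut_orbits: "card (aut_orbits G) = (if G \<cong> quaternion_group then 3 else 4)"
  unfolding card_aut_orbits_eq_card_ord_center ord_center_image iso_quaternion_iff
  by auto

end

theorem theorem4p4: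
  fixes G :: "('a, 'b) monoid_scheme"
  assumes "extraspecial_p_group G 2"
  shows "(\<forall>g \<in> carrier G. \<forall>h \<in> carrier G.
            automorphic G g h \<longleftrightarrow>
              (group.ord G g = group.ord G h \<and> (g \<in> grp_center G \<longleftrightarrow> h \<in> grp_center G)))
       \<and> card (aut_orbits G) = (if G \<cong> quaternion_group then 3 else 4)"
proof -
  obtain z where "extraspecial_2 G z"
    using extraspecial_2_if_extraspecial_p_group[OF assms] .
  then interpret extraspecial_2 G z .
  show ?thesis
    using automorphic_iff card_aut_orbits by blast
qed

end
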